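(* For any $\epsilon>0$ consider, for $r\geqslant 0$, \[ \begin{aligned} \overline u_{\rm in,\epsilon}(r) &=L(r^2+\epsilon)^{-\frac{m}{2}}, \\ \overline v_{\rm in,\epsilon}(r) &=m(n-2-m) L(r^2+\epsilon)^{-\frac{m+2}{2}}, \\ \overline w_{\rm in,\epsilon}(r) &=m(m+2)(n-2-m)(n-4-m) L(r^2+\epsilon)^{-\frac{m+4}{2}}. \end{aligned} \] Then for all $r>0$, \[ -\Delta \overline u_{\rm in,\epsilon} \geqslant \overline v_{\rm in,\epsilon},\qquad -\Delta \overline v_{\rm in,\epsilon} \geqslant \overline w_{\rm in,\epsilon},\qquad -\Delta \overline w_{\rm in,\epsilon} \geqslant \overline u_{\rm in,\epsilon}^p . \]
   Context: Let $n\geqslant 15$ and $p>p_{\mathsf{JL}}(6,n)$, where $p_{\mathsf{JL}}(6,n)=\frac{(n+4)\sqrt{3} - \sqrt{\sqrt[3]{K_0+K_1}+ \sqrt[3]{K_0-K_1} + 3n^2+32 }}{(n-8)\sqrt{3} - \sqrt{\sqrt[3]{K_0+K_1} + \sqrt[3]{K_0-K_1} + 3n^2+32 }}$ with $2K_0 =-27n^6+324 n^5-756n^4-2592 n^3 + 25776 n^2 +5184 n -23744$, $2K_1 = \sqrt{(2K_0)^2 - 4(192n^2+256)^3}$. Let $m=6/(p-1)$ and $L=\big(m(m+2)(m+4)(n-2-m)(n-4-m)(n-6-m)\big)^{1/(p-1)}$. For a function $f$ of $r=|x|$, $\Delta f$ denotes the Laplacian in $\mathbf R^n$ of $x\mapsto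 f(|x|)$, i.e. $f''+\frac{n-1}{r}f'$. *)

theory Defs
  imports "HOL-Analysis.Analysis"
begin

definition K0 :: "nat \<Rightarrow> real" where
  "K0 n = (-27*real n^6 + 324*real n^5 - 756*real n^4 - 2592*real n^3
           + 25776*real n^2 + 5184*real n - 23744) / 2"

definition K1 :: "nat \<Rightarrow> real" where
  "K1 n = sqrt ((2 * K0 n)^2 - 4 * (192 * real n^2 + 256)^3) / 2"

definition pJL6 :: "nat \<Rightarrow> real" where
  "pJL6 n = (let S = sqrt (root 3 (K0 n + K1 n) + root 3 (K0 n - K1 n) + 3 * real n^2 + 32)
             in ((real n + 4) * sqrt 3 - S) / ((real n - 8) * sqrt 3 - S))"

definition mexp :: "real \<Rightarrow> real" where
  "mexp p = 6 / (p - 1)"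

definition Lconst :: "nat \<Rightarrow> real \<Rightarrow> real" where
  "Lconst n p = (let m = mexp p in
     (m * (m + 2) * (m + 4) * (real n - 2 - m) * (real n - 4 - m) * (real n - 6 - m)) powr (1 / (p - 1)))"

definition rlap :: "nat \<Rightarrow> (real \<Rightarrow> real) \<Rightarrow> real \<Rightarrow> real" where
  "rlap n f r = deriv (deriv f) r + (real n - 1) / r * deriv f r"

definition u_in :: "nat \<Rightarrow> real \<Rightarrow> real \<Rightarrow> real \<Rightarrow> real" where
  "u_in n p \<epsilon> r = Lconst n p * (r^2 + \<epsilon>) powr (- mexp p / 2)"

definition v_in :: "nat \<Rightarrow> real \<Rightarrow> real \<Rightarrow> real \<Rightarrow> real" where
  "v_in n p \<epsilon> r = mexp p * (real n - 2 - mexp p) * Lconst n p * (r^2 + \<epsilon>) powr (- (mexp p + 2) / 2)"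

definition w_in :: "nat \<Rightarrow> real \<Rightarrow> real \<Rightarrow> real \<Rightarrow> real" where
  "w_in n p \<epsilon> r = mexp p * (mexp p + 2) * (real n - 2 - mexp p) * (real n - 4 - mexp p)
      * Lconst n p * (r^2 + \<epsilon>) powr (- (mexp p + 4) / 2)"

end

theory Submission
  imports Defs
begin

text \<open>Each of the three profiles has the form \<open>C (r\<^sup>2 + \<epsilon>)\<^bsup>-k/2\<^esup>\<close>, whose radial
  Laplacian is explicit:
  \<open>-\<Delta> = k C (r\<^sup>2 + \<epsilon>)\<^bsup>-k/2-2\<^esup> ((n - k - 2)(r\<^sup>2 + \<epsilon>) + (k + 2) \<epsilon>) \<ge> k C (n - k - 2) (r\<^sup>2 + \<epsilon>)\<^bsup>-(k+2)/2\<^esup>\<close>.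
  With \<open>k = m, m + 2, m + 4\<close> the right-hand sides are \<open>v\<close>, \<open>w\<close>, and finally
  \<open>L\<^bsup>p-1\<^esup> L (r\<^sup>2 + \<epsilon>)\<^bsup>-(m+6)/2\<^esup> = u\<^sup>p\<close>, because \<open>m p = m + 6\<close> and \<open>L\<^bsup>p-1\<^esup>\<close> is the product
  of the six factors. All coefficients are nonnegative as soon as \<open>0 < m \<le> n - 6\<close>, and this
  is where \<open>p > p\<^sub>J\<^sub>L(6, n)\<close> enters: \<open>pJL6 n\<close> is built from Cardano's formula for the real
  root of a cubic, and locating that root between two explicit polynomial bounds gives
  \<open>pJL6 n \<ge> 1 + 12 / (n - 8)\<close>, i.e. \<open>m < (n - 8) / 2\<close>.\<close>

lemma has_real_derivative_powr_sq_add: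
  fixes a e :: real
  assumes "e > 0"
  shows "((\<lambda>x. (x\<^sup>2 + e) powr a) has_real_derivative 2 * a * x * (x\<^sup>2 + e) powr (a - 1)) (at x)"
proof -
  have "((\<lambda>x. x\<^sup>2 + e) has_real_derivative 2 * x) (at x)"
    by (auto intro!: derivative_eq_intros)
  from DERIV_fun_powr[OF this, of a] show ?thesis
    using assms by (simp add: add_pos_nonneg algebra_simps)
qed

lemma deriv_powr_sq_add:
  fixes C a e :: real
  assumes "e > 0"
  shows "deriv (\<lambda>x. C * (x\<^sup>2 + e) powr a) = (\<lambda>x. 2 * a * C * x * (x\<^sup>2 + e) powr (a - 1))"
proof
  fix x
  show "deriv (\<lambda>x. C * (x\<^sup>2 + e) powr a) x = 2 * a * C * x * (x\<^sup>2 + e) powr (a - 1)"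
    using DERIV_cmult[OF has_real_derivative_powr_sq_add[OF assms], of C a x]
    by (intro DERIV_imp_deriv) (simp add: algebra_simps)
qed

lemma deriv2_powr_sq_add:
  fixes C a e :: real
  assumes "e > 0"
  shows "deriv (deriv (\<lambda>x. C * (x\<^sup>2 + e) powr a)) x
           = 2 * a * C * ((x\<^sup>2 + e) powr (a - 1) + 2 * (a - 1) * x\<^sup>2 * (x\<^sup>2 + e) powr (a - 2))"
proof -
  have "((\<lambda>x. (x\<^sup>2 + e) powr (a - 1)) has_real_derivative 2 * (a - 1) * x * (x\<^sup>2 + e) powr (a - 2)) (at x)"
    using has_real_derivative_powr_sq_add[OF assms, where a = "a - 1" and x = x] by (simp add: algebra_simps)
  from DERIV_cmult[OF DERIV_mult[OF DERIV_ident this], of "2 * a * C"]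
  have "((\<lambda>x. 2 * a * C * x * (x\<^sup>2 + e) powr (a - 1)) has_real_derivative
           2 * a * C * ((x\<^sup>2 + e) powr (a - 1) + 2 * (a - 1) * x\<^sup>2 * (x\<^sup>2 + e) powr (a - 2))) (at x)"
    by (simp add: algebra_simps power2_eq_square)
  then show ?thesis
    unfolding deriv_powr_sq_add[OF assms] by (rule DERIV_imp_deriv)
qed

lemma rlap_powr_sq_add:
  fixes C a e r :: real
  assumes "e > 0" and "r \<noteq> 0"
  shows "rlap n (\<lambda>x. C * (x\<^sup>2 + e) powr a) r
           = 2 * a * C * (r\<^sup>2 + e) powr (a - 2) * (real n * (r\<^sup>2 + e) + 2 * (a - 1) * r\<^sup>2)"
proof -
  have "(r\<^sup>2 + e) powr (a - 1) = (r\<^sup>2 + e) powr (a - 2) * (r\<^sup>2 + e)"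
    using assms powr_add[of "r\<^sup>2 + e" "a - 2" 1] by (simp add: add_pos_nonneg)
  then show ?thesis
    unfolding rlap_def deriv2_powr_sq_add[OF assms(1)] unfolding deriv_powr_sq_add[OF assms(1)]
    using assms(2) by (simp add: field_simps power2_eq_square)
qed

lemma minus_rlap_powr_sq_add_ge:
  fixes C k e r :: real
  assumes "e > 0" and "r > 0" and "C \<ge> 0" and "k \<ge> 0"
  shows "- rlap n (\<lambda>x. C * (x\<^sup>2 + e) powr (- k / 2)) r
           \<ge> C * k * (real n - k - 2) * (r\<^sup>2 + e) powr (- (k + 2) / 2)"
proof -
  define s where "s = r\<^sup>2 + e"
  have "s > 0" using assms by (simp add: s_def add_pos_nonneg)
  then have "s powr (- (k + 2) / 2) = s powr (- k / 2 - 2) * s"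
    using powr_add[of s "- k / 2 - 2" 1] by (simp add: field_simps)
  then have "- rlap n (\<lambda>x. C * (x\<^sup>2 + e) powr (- k / 2)) r
               - C * k * (real n - k - 2) * s powr (- (k + 2) / 2)
             = C * k * (k + 2) * e * s powr (- k / 2 - 2)"
    unfolding rlap_powr_sq_add[OF assms(1) less_imp_neq[OF assms(2), symmetric]] s_def[symmetric]
    by (simp add: s_def algebra_simps)
  moreover have "C * k * (k + 2) * e * s powr (- k / 2 - 2) \<ge> 0"
    using assms by simp
  ultimately show ?thesis unfolding s_def by linarith
qed

lemma cardano_root_sign:
  fixes k P t :: real
  assumes "P ^ 3 < k\<^sup>2"
  defines "A \<equiv> root 3 (k + sqrt (k\<^sup>2 - P ^ 3)) + root 3 (k - sqrt (k\<^sup>2 - P ^ 3))"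
  shows "0 < t ^ 3 - 3 * P * t - 2 * k \<longleftrightarrow> A < t"
proof -
  define a where "a = root 3 (k + sqrt (k\<^sup>2 - P ^ 3))"
  define b where "b = root 3 (k - sqrt (k\<^sup>2 - P ^ 3))"
  have a3: "a ^ 3 = k + sqrt (k\<^sup>2 - P ^ 3)" and b3: "b ^ 3 = k - sqrt (k\<^sup>2 - P ^ 3)"
    unfolding a_def b_def by (simp_all add: odd_real_root_pow)
  have "(k + sqrt (k\<^sup>2 - P ^ 3)) * (k - sqrt (k\<^sup>2 - P ^ 3)) = P ^ 3"
    using assms(1) by (simp add: algebra_simps power2_eq_square)
  then have ab: "a * b = P"
    unfolding a_def b_def real_root_mult[symmetric] by (simp add: odd_real_root_power_cancel)
  have "a \<noteq> b" using a3 b3 assms(1) by auto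
  moreover have "(a + b)\<^sup>2 - 4 * P = (a - b)\<^sup>2"
    unfolding ab[symmetric] by algebra
  ultimately have disc: "4 * P < (a + b)\<^sup>2"
    by (smt (verit) right_minus_eq zero_less_power2)
  have A: "A = a + b" unfolding A_def a_def b_def ..
  have "A ^ 3 - 3 * P * A - 2 * k = 0"
    using a3 b3 unfolding A ab[symmetric] by algebra
  then have factor: "t ^ 3 - 3 * P * t - 2 * k = (t - A) * ((2 * t + A)\<^sup>2 + 3 * (A\<^sup>2 - 4 * P)) / 4"
    by algebra
  have "0 < (2 * t + A)\<^sup>2 + 3 * (A\<^sup>2 - 4 * P)"
    using disc unfolding A by (intro add_nonneg_pos) auto
  then show ?thesis unfolding factor by (simp add: zero_less_mult_iff)
qed

lemma K1_eq: "K1 n = sqrt ((K0 n)\<^sup>2 - (192 * real n ^ 2 + 256) ^ 3)"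
proof -
  have "(2 * K0 n)\<^sup>2 - 4 * (192 * real n ^ 2 + 256) ^ 3 = 4 * ((K0 n)\<^sup>2 - (192 * real n ^ 2 + 256) ^ 3)"
    by (simp add: power2_eq_square)
  then show ?thesis unfolding K1_def by (simp only: real_sqrt_mult) simp
qed

definition jl_cubic :: "nat \<Rightarrow> real \<Rightarrow> real" where
  "jl_cubic n t = t ^ 3 - 3 * (192 * real n ^ 2 + 256) * t - 2 * K0 n"

text \<open>The three polynomial facts below become evident after substituting \<open>n = t + 15\<close>:
  all coefficients in \<open>t\<close> are then positive.\<close>

lemma K0_discriminant_pos:
  assumes "n \<ge> 15"
  shows "(192 * real n ^ 2 + 256) ^ 3 < (K0 n)\<^sup>2"
proof -
  obtain t :: real where t: "t \<ge> 0" "real n = t + 15"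
    using assms by (intro that[of "real n - 15"]) auto
  have "0 < 10214160759983817 + 10585461850409628*t + 4894534148604354*t^2 + 1347076448060364*t^3
            + 246965545626615*t^4 + 31863611628216*t^5 + 2971699904988*t^6 + 202081266936*t^7
            + 9951685191*t^8 + 346289580*t^9 + 8084610*t^10 + 113724*t^11 + 729*t^12"
    using t(1) by (intro add_pos_nonneg mult_nonneg_nonneg zero_le_power) auto
  also have "\<dots> = 4 * ((K0 n)\<^sup>2 - (192 * real n ^ 2 + 256) ^ 3)"
    unfolding K0_def t(2) by algebra
  finally show ?thesis by simp
qed

lemma jl_cubic_pos_iff:
  assumes "n \<ge> 15"
  shows "0 < jl_cubic n t \<longleftrightarrow> root 3 (K0 n + K1 n) + root 3 (K0 n - K1 n) < t"
  unfolding jl_cubic_def K1_eq using cardano_root_sign[OF K0_discriminant_pos[OF assms]] .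

lemma jl_cubic_pos_at_upper:
  assumes "n \<ge> 15"
  shows "0 < jl_cubic n (160 - 48 * real n)"
proof -
  obtain t :: real where t: "t \<ge> 0" "real n = t + 15"
    using assms by (intro that[of "real n - 15"]) auto
  have "0 < 265356 + 91837800*t + 31843476*t^2 + 4234032*t^3 + 270324*t^4 + 8424*t^5 + 108*t^6"
    using t(1) by (intro add_pos_nonneg mult_nonneg_nonneg zero_le_power) auto
  also have "\<dots> = 4 * jl_cubic n (160 - 48 * real n)"
    unfolding jl_cubic_def K0_def t(2) by algebra
  finally show ?thesis by simp
qed

lemma jl_cubic_neg_at_lower:
  assumes "n \<ge> 15"
  shows "jl_cubic n (- 3 * real n ^ 2 - 32) < 0"
proof -
  obtain t :: real where t: "t \<ge> 0" "real n = t + 15"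
    using assms by (intro that[of "real n - 15"]) auto
  have "0 < 634187232 + 235303056*t + 34582464*t^2 + 2516832*t^3 + 90720*t^4 + 1296*t^5"
    using t(1) by (intro add_pos_nonneg mult_nonneg_nonneg zero_le_power) auto
  also have "\<dots> = - 4 * jl_cubic n (- 3 * real n ^ 2 - 32)"
    unfolding jl_cubic_def K0_def t(2) by algebra
  finally show ?thesis by simp
qed

lemma pJL6_ge:
  assumes "n \<ge> 15"
  shows "1 + 12 / (real n - 8) \<le> pJL6 n"
proof -
  define A where "A = root 3 (K0 n + K1 n) + root 3 (K0 n - K1 n)"
  define S where "S = sqrt (A + 3 * real n ^ 2 + 32)"
  have "A < 160 - 48 * real n"
    using jl_cubic_pos_iff[OF assms] jl_cubic_pos_at_upper[OF assms] unfolding A_def by blast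
  moreover have "- 3 * real n ^ 2 - 32 \<le> A"
    using jl_cubic_pos_iff[OF assms, of "- 3 * real n ^ 2 - 32"] jl_cubic_neg_at_lower[OF assms]
    unfolding A_def by fastforce
  ultimately have "0 \<le> A + 3 * real n ^ 2 + 32" and "A + 3 * real n ^ 2 + 32 < 3 * (real n - 8)\<^sup>2"
    by (simp_all add: power2_eq_square algebra_simps)
  moreover have "sqrt (3 * (real n - 8)\<^sup>2) = sqrt 3 * (real n - 8)"
    using assms by (simp add: real_sqrt_mult)
  ultimately have S: "0 \<le> S" "S < sqrt 3 * (real n - 8)"
    unfolding S_def by (metis real_sqrt_ge_zero real_sqrt_less_mono)+
  define d where "d = (real n - 8) * sqrt 3 - S"
  have d: "0 < d" "d \<le> (real n - 8) * sqrt 3"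
    using S by (simp_all add: d_def algebra_simps)
  have "pJL6 n = 1 + 12 * sqrt 3 / d"
    using d unfolding pJL6_def A_def[symmetric] S_def[symmetric] Let_def d_def
    by (simp add: field_simps)
  moreover have "12 * sqrt 3 / ((real n - 8) * sqrt 3) \<le> 12 * sqrt 3 / d"
    using d by (intro divide_left_mono) auto
  ultimately show ?thesis using assms by simp
qed

lemma mexp_lt_of_pJL6_lt:
  assumes "n \<ge> 15" and "pJL6 n < p"
  shows "1 < p" and "mexp p < real n - 6"
proof -
  have n8: "0 < real n - 8" using assms(1) by simp
  then have gt: "12 / (real n - 8) < p - 1"
    using pJL6_ge[OF assms(1)] assms(2) by simp
  moreover have "0 < 12 / (real n - 8)" using n8 by simp
  ultimately show "1 < p" by linarith
  then have "mexp p < (real n - 8) / 2"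
    using gt n8 unfolding mexp_def by (simp add: field_simps)
  also have "\<dots> < real n - 6"
    using n8 by (simp add: field_simps)
  finally show "mexp p < real n - 6" .
qed

lemma Lconst_nonneg: "0 \<le> Lconst n p"
  unfolding Lconst_def Let_def by simp

lemma Lconst_powr_pred:
  assumes "1 < p" and "mexp p \<le> real n - 6"
  defines "m \<equiv> mexp p"
  shows "Lconst n p powr (p - 1) = m * (m + 2) * (m + 4) * (real n - 2 - m) * (real n - 4 - m) * (real n - 6 - m)"
proof -
  have "0 < m" using assms(1) by (simp add: m_def mexp_def)
  then have "0 \<le> m * (m + 2) * (m + 4) * (real n - 2 - m) * (real n - 4 - m) * (real n - 6 - m)"
    using assms(2) by (simp add: m_def)
  then show ?thesis
    using assms(1) unfolding Lconst_def m_def Let_def by (simp add: powr_powr)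
qed

lemma minus_rlap_u_in_ge:
  assumes "1 < p" and "\<epsilon> > 0" and "r > 0"
  shows "v_in n p \<epsilon> r \<le> - rlap n (u_in n p \<epsilon>) r"
proof -
  have "0 < mexp p" using assms(1) by (simp add: mexp_def)
  then have "Lconst n p * mexp p * (real n - mexp p - 2) * (r\<^sup>2 + \<epsilon>) powr (- (mexp p + 2) / 2)
               \<le> - rlap n (u_in n p \<epsilon>) r"
    unfolding u_in_def[abs_def] by (intro minus_rlap_powr_sq_add_ge) (simp_all add: assms Lconst_nonneg)
  then show ?thesis unfolding v_in_def by (simp add: algebra_simps)
qed

lemma minus_rlap_v_in_ge:
  assumes "1 < p" and "mexp p \<le> real n - 2" and "\<epsilon> > 0" and "r > 0"
  shows "w_in n p \<epsilon> r \<le> - rlap n (v_in n p \<epsilon>) r"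
proof -
  have "0 < mexp p" using assms(1) by (simp add: mexp_def)
  then have "mexp p * (real n - 2 - mexp p) * Lconst n p * (mexp p + 2) * (real n - (mexp p + 2) - 2)
               * (r\<^sup>2 + \<epsilon>) powr (- (mexp p + 2 + 2) / 2)
               \<le> - rlap n (v_in n p \<epsilon>) r"
    unfolding v_in_def[abs_def]
    by (intro minus_rlap_powr_sq_add_ge) (simp_all add: assms Lconst_nonneg)
  moreover have "- (mexp p + 2 + 2) / 2 = - (mexp p + 4) / 2" by simp
  ultimately show ?thesis unfolding w_in_def by (simp add: algebra_simps)
qed

lemma minus_rlap_w_in_ge:
  assumes "1 < p" and "mexp p \<le> real n - 6" and "\<epsilon> > 0" and "r > 0"
  shows "u_in n p \<epsilon> r powr p \<le> - rlap n (w_in n p \<epsilon>) r"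
proof -
  define m where "m = mexp p"
  define L where "L = Lconst n p"
  have "0 < m" using assms(1) by (simp add: m_def mexp_def)
  then have "0 \<le> m * (m + 2) * (real n - 2 - m) * (real n - 4 - m) * L"
    using assms(2) Lconst_nonneg[of n p] by (simp add: m_def L_def)
  then have bound: "m * (m + 2) * (real n - 2 - m) * (real n - 4 - m) * L * (m + 4) * (real n - (m + 4) - 2)
               * (r\<^sup>2 + \<epsilon>) powr (- (m + 4 + 2) / 2)
               \<le> - rlap n (w_in n p \<epsilon>) r"
    unfolding w_in_def[abs_def] m_def[symmetric] L_def[symmetric]
    using \<open>0 < m\<close> by (intro minus_rlap_powr_sq_add_ge) (simp_all add: assms)
  have "u_in n p \<epsilon> r powr p = L powr (p - 1) * L * (r\<^sup>2 + \<epsilon>) powr (- m / 2 * p)"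
    unfolding u_in_def m_def[symmetric] L_def[symmetric]
    using powr_add[of L "p - 1" 1] Lconst_nonneg[of n p]
    by (simp add: L_def powr_mult powr_powr)
  also have "- m / 2 * p = - (m + 4 + 2) / 2"
    using assms(1) by (simp add: m_def mexp_def field_simps)
  also have "L powr (p - 1) = m * (m + 2) * (m + 4) * (real n - 2 - m) * (real n - 4 - m) * (real n - 6 - m)"
    unfolding L_def m_def by (rule Lconst_powr_pred[OF assms(1,2)])
  finally show ?thesis
    using bound by (simp add: algebra_simps)
qed

theorem lemma3p3:
  fixes n :: nat and p \<epsilon> r :: real
  assumes "n \<ge> 15" and "p > pJL6 n" and "\<epsilon> > 0" and "r > 0"
  shows "- rlap n (u_in n p \<epsilon>) r \<ge> v_in n p \<epsilon> r
       \<and> - rlap n (v_in n p \<epsilon>) r \<ge> w_in n p \<epsilon> r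
       \<and> - rlap n (w_in n p \<epsilon>) r \<ge> (u_in n p \<epsilon> r) powr p"
proof -
  have p: "1 < p" and m: "mexp p \<le> real n - 6"
    using mexp_lt_of_pJL6_lt[OF assms(1,2)] by simp_all
  then have "mexp p \<le> real n - 2" by simp
  with p m assms(3,4) show ?thesis
    using minus_rlap_u_in_ge minus_rlap_v_in_ge minus_rlap_w_in_ge by blast
qed

end
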